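(* Let $\mathcal B$ be a Bayesian network all of whose random variables are Boolean, and let $\Pi_{\mathcal B}$ be its $\mathrm{LP}^{\mathrm{MLN}}$ translation. Then for every truth assignment $I$ to the random variables of $\mathcal B$ (identified with the set of variables assigned true), the probability of $I$ under $\mathcal B$ equals $\sum_{J} P_{\Pi_{\mathcal B}}(J)$, where $J$ ranges over the interpretations of $\Pi_{\mathcal B}$ whose restriction to the variable atoms is $I$.
   Context: $\mathrm{LP}^{\mathrm{MLN}}$: a program is a finite set of weighted rules $w:R$ with $w$ real or the symbol $\alpha$ (infinite weight). For ground $\Pi$ and interpretation $I$: $\overline{\Pi}$ drops weights, $\Pi_I$ is the set of rules satisfied by $I$, $\mathrm{SM}[\Pi]=\{I: I\text{ stable model of }\overline{\Pi_I}\}$, $W_\Pi(I)=\exp(\sum_{w:R\in\Pi_I}w)$ if $I\in\mathrm{SM}[\Pi]$ and $0$ otherwise, and $P_\Pi(I)=\lim_{\alpha\to\infty}W_\Pi(I)/\sum_{J\in\mathrm{SM}[\Pi]}W_\Pi(J)$. Translation $\Pi_{\mathcal B}$: each random variable $V$ is an atom. For each node $V$ with parents $V_1,\dots,V_n$ ($n\ge0$) and each conditional probability table entry $P(V=\mathbf t\mid V_1=S_1,\dots,V_n=S_n)=p$, $S_j\in\{\mathbf t,\mathbf f\}$, introduce an atom $PF(V,S_1,\dots,S_n)$ and include: the weighted fact $\ln(p/(1-p)): PF(V,S_1,\dots,S_n)$ if $0<p<1$; the hard fact $\alpha: PF(V,S_1,\dots,S_n)$ if $p=1$; the hard constraint $\alpha:\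 \leftarrow \mathtt{not}\ PF(V,S_1,\dots,S_n)$ if $p=0$. Also include for each such entry the hard rule $\alpha: V\leftarrow V_1^{S_1},\dots,V_n^{S_n}, PF(V,S_1,\dots,S_n)$, where $V_j^{S_j}$ is $V_j$ if $S_j=\mathbf t$ and $\mathtt{not}\ V_j$ if $S_j=\mathbf f$. *)

theory Defs
  imports Complex_Main
begin

text \<open>A ground rule  H <- p1,...,pm, not n1,...,not nk ; head None = constraint.\<close>
datatype 'a rule = Rule (head: "'a option") (pos: "'a set") (neg: "'a set")

definition sat_body :: "'a set \<Rightarrow> 'a rule \<Rightarrow> bool" where
  "sat_body I r \<longleftrightarrow> pos r \<subseteq> I \<and> neg r \<inter> I = {}"

definition sat_rule :: "'a set \<Rightarrow> 'a rule \<Rightarrow> bool" where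
  "sat_rule I r \<longleftrightarrow> (sat_body I r \<longrightarrow> (case head r of None \<Rightarrow> False | Some h \<Rightarrow> h \<in> I))"

definition is_model :: "'a set \<Rightarrow> 'a rule set \<Rightarrow> bool" where
  "is_model I R \<longleftrightarrow> (\<forall>r\<in>R. sat_rule I r)"

definition reduct :: "'a rule set \<Rightarrow> 'a set \<Rightarrow> 'a rule set" where
  "reduct R I = {Rule (head r) (pos r) {} | r. r \<in> R \<and> neg r \<inter> I = {}}"

definition stable_model :: "'a rule set \<Rightarrow> 'a set \<Rightarrow> bool" where
  "stable_model R I \<longleftrightarrow> is_model I (reduct R I) \<and> (\<forall>J. J \<subset> I \<longrightarrow> \<not> is_model J (reduct R I))"

text \<open>Weights: a real number, or the symbol alpha (hard rule).\<close>
datatype weight = Soft real | Hard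

fun wval :: "real \<Rightarrow> weight \<Rightarrow> real" where
  "wval \<alpha> (Soft w) = w"
| "wval \<alpha> Hard = \<alpha>"

type_synonym 'a lpmln = "(weight \<times> 'a rule) set"

definition lp_atoms :: "'a lpmln \<Rightarrow> 'a set" where
  "lp_atoms \<Pi> = (\<Union>(w, r)\<in>\<Pi>. set_option (head r) \<union> pos r \<union> neg r)"

definition sat_part :: "'a lpmln \<Rightarrow> 'a set \<Rightarrow> 'a lpmln" where
  "sat_part \<Pi> I = {wr \<in> \<Pi>. sat_rule I (snd wr)}"

definition SM :: "'a lpmln \<Rightarrow> 'a set set" where
  "SM \<Pi> = {I. stable_model (snd ` sat_part \<Pi> I) I}"

definition W :: "'a lpmln \<Rightarrow> real \<Rightarrow> 'a set \<Rightarrow> real" where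
  "W \<Pi> \<alpha> I = (if I \<in> SM \<Pi> then exp (\<Sum>wr\<in>sat_part \<Pi> I. wval \<alpha> (fst wr)) else 0)"

definition P :: "'a lpmln \<Rightarrow> 'a set \<Rightarrow> real" where
  "P \<Pi> I = Lim at_top (\<lambda>\<alpha>::real. W \<Pi> \<alpha> I / (\<Sum>J\<in>SM \<Pi>. W \<Pi> \<alpha> J))"

text \<open>A Bayesian network on Boolean variables Vs: each node v has an ordered (distinct)
  list of parents par v, and cpt v S = P(v = t | par v = S) for S :: bool list of matching length.\<close>
definition bn_wf :: "'v set \<Rightarrow> ('v \<Rightarrow> 'v list) \<Rightarrow> ('v \<Rightarrow> bool list \<Rightarrow> real) \<Rightarrow> bool" where
  "bn_wf Vs par cpt \<longleftrightarrow> finite Vs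
     \<and> (\<forall>v\<in>Vs. set (par v) \<subseteq> Vs \<and> distinct (par v))
     \<and> acyclic {(u, v). v \<in> Vs \<and> u \<in> set (par v)}
     \<and> (\<forall>v\<in>Vs. \<forall>S. length S = length (par v) \<longrightarrow> 0 \<le> cpt v S \<and> cpt v S \<le> 1)"

definition bn_prob :: "'v set \<Rightarrow> ('v \<Rightarrow> 'v list) \<Rightarrow> ('v \<Rightarrow> bool list \<Rightarrow> real) \<Rightarrow> 'v set \<Rightarrow> real" where
  "bn_prob Vs par cpt I =
     (\<Prod>v\<in>Vs. let p = cpt v (map (\<lambda>u. u \<in> I) (par v)) in if v \<in> I then p else 1 - p)"

datatype 'v bnatom = RV 'v | PF 'v "bool list"

definition pf_rules :: "'v \<Rightarrow> bool list \<Rightarrow> real \<Rightarrow> 'v bnatom lpmln" where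
  "pf_rules v S p =
     (if 0 < p \<and> p < 1 then {(Soft (ln (p / (1 - p))), Rule (Some (PF v S)) {} {})}
      else if p = 1 then {(Hard, Rule (Some (PF v S)) {} {})}
      else if p = 0 then {(Hard, Rule None {PF v S} {})}
      else {})"

definition cpt_rule :: "('v \<Rightarrow> 'v list) \<Rightarrow> 'v \<Rightarrow> bool list \<Rightarrow> 'v bnatom rule" where
  "cpt_rule par v S =
     Rule (Some (RV v))
          (insert (PF v S) {RV u | u. (u, True) \<in> set (zip (par v) S)})
          {RV u | u. (u, False) \<in> set (zip (par v) S)}"

definition bn_translation :: "'v set \<Rightarrow> ('v \<Rightarrow> 'v list) \<Rightarrow> ('v \<Rightarrow> bool list \<Rightarrow> real) \<Rightarrow> 'v bnatom lpmln" where
  "bn_translation Vs par cpt =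
     (\<Union>(v, S)\<in>{(v, S). v \<in> Vs \<and> length S = length (par v)}.
        pf_rules v S (cpt v S) \<union> {(Hard, cpt_rule par v S)})"

end

theory Submission
  imports Defs
begin

text \<open>An interpretation of \<open>\<Pi>\<^sub>B\<close> is determined by the set \<open>I\<close> of true variables and the set
  \<open>G\<close> of CPT entries whose probabilistic-fact atom is true. It is a stable model satisfying every
  hard rule iff \<open>G\<close> contains no entry of probability 0, every entry of probability 1, and, for each
  variable \<open>v\<close>, the entry selected by the parents' values in \<open>I\<close> exactly when \<open>v \<in> I\<close>; stability
  holds because every atom is supported along the acyclic network. Such stable models exist, so
  as \<open>\<alpha> \<rightarrow> \<infinity>\<close> the others get probability 0, while each of them gets weight proportional to
  \<open>\<Prod> p / (1 - p)\<close> over its soft facts, i.e. probability \<open>\<Prod> p\<close> or \<open>1 - p\<close> over all entries as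
  if the facts were independent Bernoulli variables. Summing over \<open>G\<close> for fixed \<open>I\<close> marginalises
  out the entries not selected by \<open>I\<close> and leaves the chain-rule product of the network; the
  normalising constant is 1 because these products sum to 1.\<close>

section \<open>Softmax limits and Bernoulli sums\<close>

lemma tendsto_softmax_at_top:
  fixes h s :: "'a \<Rightarrow> real"
  assumes "finite M" and "J \<in> M" and le: "\<And>K. K \<in> M \<Longrightarrow> h K \<le> N" and "\<exists>K\<in>M. h K = N"
  shows "((\<lambda>\<alpha>. exp (\<alpha> * h J + s J) / (\<Sum>K\<in>M. exp (\<alpha> * h K + s K))) \<longlongrightarrow>
    (if h J = N then exp (s J) else 0) / (\<Sum>K\<in>{K\<in>M. h K = N}. exp (s K))) at_top"
proof -
  define e where "e K \<alpha> = exp (\<alpha> * (h K - N) + s K)" for K \<alpha>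
  have scale: "exp (\<alpha> * h K + s K) = exp (\<alpha> * N) * e K \<alpha>" for \<alpha> K
    by (simp add: e_def algebra_simps flip: exp_add)
  have lim: "(e K \<longlongrightarrow> (if h K = N then exp (s K) else 0)) at_top" if "K \<in> M" for K
  proof (cases "h K = N")
    case False
    with le[OF that] have "h K - N < 0" by simp
    then have "LIM \<alpha> at_top. (h K - N) * \<alpha> :> at_bot"
      by (rule filterlim_tendsto_neg_mult_at_bot[OF tendsto_const _ filterlim_ident])
    then have "LIM \<alpha> at_top. s K + (h K - N) * \<alpha> :> at_bot"
      by (simp add: filterlim_tendsto_add_at_bot_iff[OF tendsto_const])
    then have "LIM \<alpha> at_top. \<alpha> * (h K - N) + s K :> at_bot"
      by (simp add: algebra_simps)
    then have "(e K \<longlongrightarrow> 0) at_top"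
      unfolding e_def[abs_def] by (rule filterlim_compose[OF exp_at_bot])
    with False show ?thesis by simp
  qed (simp add: e_def[abs_def])
  have "((\<lambda>\<alpha>. \<Sum>K\<in>M. e K \<alpha>) \<longlongrightarrow> (\<Sum>K\<in>M. if h K = N then exp (s K) else 0)) at_top"
    by (intro tendsto_sum lim)
  then have den: "((\<lambda>\<alpha>. \<Sum>K\<in>M. e K \<alpha>) \<longlongrightarrow> (\<Sum>K\<in>{K\<in>M. h K = N}. exp (s K))) at_top"
    using \<open>finite M\<close> by (simp add: sum.inter_filter)
  have "(\<Sum>K\<in>{K\<in>M. h K = N}. exp (s K)) > 0"
    using assms(1,4) by (intro sum_pos) auto
  then have lim_e: "((\<lambda>\<alpha>. e J \<alpha> / (\<Sum>K\<in>M. e K \<alpha>)) \<longlongrightarrow>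
      (if h J = N then exp (s J) else 0) / (\<Sum>K\<in>{K\<in>M. h K = N}. exp (s K))) at_top"
    by (intro tendsto_divide lim[OF \<open>J \<in> M\<close>] den) simp
  have "(\<lambda>\<alpha>. exp (\<alpha> * h J + s J) / (\<Sum>K\<in>M. exp (\<alpha> * h K + s K))) =
      (\<lambda>\<alpha>. e J \<alpha> / (\<Sum>K\<in>M. e K \<alpha>))"
    by (simp add: scale flip: sum_distrib_left)
  with lim_e show ?thesis by simp
qed

lemma sum_Pow_insert:
  assumes "finite A" and "a \<notin> A"
  shows "(\<Sum>X\<in>Pow (insert a A). f X) = (\<Sum>X\<in>Pow A. f X + f (insert a X))"
proof -
  have inj: "inj_on (insert a) (Pow A)"
    using assms(2) by (auto simp: inj_on_def)
  have "Pow A \<inter> insert a ` Pow A = {}"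
    using assms(2) by auto
  then have "(\<Sum>X\<in>Pow (insert a A). f X) = (\<Sum>X\<in>Pow A. f X) + (\<Sum>X\<in>insert a ` Pow A. f X)"
    unfolding Pow_insert using assms(1) by (intro sum.union_disjoint) auto
  also have "\<dots> = (\<Sum>X\<in>Pow A. f X + f (insert a X))"
    by (simp add: sum.reindex[OF inj] sum.distrib)
  finally show ?thesis .
qed
lemma sum_Pow_prod_bernoulli:
  fixes p :: "'a \<Rightarrow> 'b::comm_ring_1"
  assumes "finite A"
  shows "(\<Sum>H\<in>Pow A. \<Prod>x\<in>A. if x \<in> H then p x else 1 - p x) = 1"
proof -
  have split: "(\<Prod>x\<in>A. if x \<in> H then p x else 1 - p x) = prod p H * prod (\<lambda>x. 1 - p x) (A - H)"
    if "H \<subseteq> A" for H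
  proof -
    have "A \<inter> H = H" and "A \<inter> - H = A - H"
      using that by auto
    then show ?thesis
      using prod.If_cases[OF assms, of "\<lambda>x. x \<in> H" p "\<lambda>x. 1 - p x"] by simp
  qed
  have "(\<Sum>H\<in>Pow A. \<Prod>x\<in>A. if x \<in> H then p x else 1 - p x) =
      (\<Sum>H\<in>Pow A. prod p H * prod (\<lambda>x. 1 - p x) (A - H))"
    by (intro sum.cong) (auto simp: split)
  also have "\<dots> = (\<Prod>x\<in>A. p x + (1 - p x))"
    by (rule prod_add[OF assms, symmetric])
  finally show ?thesis by simp
qed

lemma sum_Pow_prod_marginal:
  fixes p :: "'a \<Rightarrow> 'b::comm_ring_1"
  assumes "finite A" and "D \<subseteq> A" and "E \<subseteq> D"
  shows "(\<Sum>G\<in>Pow A. if G \<inter> D = E then \<Prod>x\<in>A. if x \<in> G then p x else 1 - p x else 0) =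
    (\<Prod>x\<in>D. if x \<in> E then p x else 1 - p x)"
proof -
  let ?q = "\<lambda>G x. if x \<in> G then p x else 1 - p x"
  have split: "{G \<in> Pow A. G \<inter> D = E} = (\<union>) E ` Pow (A - D)"
  proof (intro equalityI subsetI)
    fix G assume "G \<in> {G \<in> Pow A. G \<inter> D = E}"
    then have "G = E \<union> (G - D)" and "G - D \<in> Pow (A - D)" by auto
    then show "G \<in> (\<union>) E ` Pow (A - D)" by (rule image_eqI)
  qed (use assms(2,3) in auto)
  have inj: "inj_on ((\<union>) E) (Pow (A - D))"
    using assms(3) by (auto simp: inj_on_def)
  have factor: "prod (?q (E \<union> H)) A = prod (?q E) D * prod (?q H) (A - D)" if "H \<subseteq> A - D" for H
  proof -
    have "prod (?q (E \<union> H)) A = prod (?q (E \<union> H)) D * prod (?q (E \<union> H)) (A - D)"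
      by (rule prod.subset_diff[OF assms(2,1), THEN trans]) (rule mult.commute)
    also have "prod (?q (E \<union> H)) D = prod (?q E) D"
      using that by (intro prod.cong) auto
    also have "prod (?q (E \<union> H)) (A - D) = prod (?q H) (A - D)"
      using assms(3) by (intro prod.cong) auto
    finally show ?thesis .
  qed
  have "(\<Sum>G\<in>Pow A. if G \<inter> D = E then prod (?q G) A else 0) = (\<Sum>G\<in>{G \<in> Pow A. G \<inter> D = E}. prod (?q G) A)"
    by (rule sum.inter_filter[symmetric]) (use assms(1) in simp)
  also have "\<dots> = (\<Sum>H\<in>Pow (A - D). prod (?q E) D * prod (?q H) (A - D))"
    unfolding split sum.reindex[OF inj] o_def by (intro sum.cong refl factor) simp
  also have "\<dots> = prod (?q E) D"
    using sum_Pow_prod_bernoulli[of "A - D" p] assms(1) by (simp flip: sum_distrib_left)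
  finally show ?thesis .
qed

section \<open>Stable models\<close>

lemma reduct_memI: "r \<in> R \<Longrightarrow> neg r \<inter> J = {} \<Longrightarrow> Rule (head r) (pos r) {} \<in> reduct R J"
  unfolding reduct_def by blast

lemma is_model_reduct: "is_model J R \<Longrightarrow> is_model J (reduct R J)"
  unfolding is_model_def reduct_def sat_rule_def sat_body_def by auto

lemma stable_model_supported:
  assumes "stable_model R J" and "a \<in> J"
  shows "\<exists>r\<in>R. head r = Some a \<and> sat_body J r"
proof (rule ccontr)
  assume unsupported: "\<not> ?thesis"
  have "is_model (J - {a}) (reduct R J)"
    unfolding is_model_def
  proof
    fix r' assume "r' \<in> reduct R J"
    then obtain r where r: "r \<in> R" "neg r \<inter> J = {}" and r': "r' = Rule (head r) (pos r) {}"
      unfolding reduct_def by blast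
    show "sat_rule (J - {a}) r'"
    proof (cases "pos r \<subseteq> J - {a}")
      case True
      then have body: "sat_body J r"
        using r(2) unfolding sat_body_def by blast
      have "sat_rule J r'"
        using assms(1) \<open>r' \<in> reduct R J\<close> unfolding stable_model_def is_model_def by blast
      then obtain h where h: "head r = Some h" "h \<in> J"
        using True r' by (auto simp: sat_rule_def sat_body_def split: option.splits)
      with unsupported r(1) body have "h \<noteq> a" by blast
      with h r' show ?thesis by (simp add: sat_rule_def)
    qed (simp add: r' sat_rule_def sat_body_def)
  qed
  moreover have "J - {a} \<subset> J"
    using assms(2) by blast
  ultimately show False
    using assms(1) unfolding stable_model_def by blast
qed

lemma stable_model_if_well_supported:
  assumes "is_model J R" and "wf E"
    and support: "\<And>a. a \<in> J \<Longrightarrow> \<exists>r\<in>R. head r = Some a \<and> sat_body J r \<and> (\<forall>b\<in>pos r. (b, a) \<in> E)"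
  shows "stable_model R J"
proof -
  have "J \<subseteq> K" if K: "is_model K (reduct R J)" for K
  proof -
    have "a \<in> J \<longrightarrow> a \<in> K" for a
      using \<open>wf E\<close>
    proof (induction a rule: wf_induct_rule)
      case (less a)
      show ?case
      proof
        assume "a \<in> J"
        then obtain r where r: "r \<in> R" "head r = Some a" "sat_body J r" and "\<forall>b\<in>pos r. (b, a) \<in> E"
          using support by blast
        then have "pos r \<subseteq> K"
          using less.IH unfolding sat_body_def by blast
        moreover have "Rule (head r) (pos r) {} \<in> reduct R J"
          using r unfolding sat_body_def by (intro reduct_memI) auto
        ultimately show "a \<in> K"
          using K r(2) unfolding is_model_def sat_rule_def sat_body_def by fastforce
      qed
    qed
    then show ?thesis by blast
  qed
  then show ?thesis
    using assms(1) unfolding stable_model_def by (blast intro: is_model_reduct)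
qed

section \<open>\<open>LP\<^sup>MLN\<close> programs with satisfiable hard rules\<close>

definition sat_hard :: "'a lpmln \<Rightarrow> 'a set \<Rightarrow> bool" where
  "sat_hard \<Pi> J \<longleftrightarrow> (\<forall>(w, r)\<in>\<Pi>. w = Hard \<longrightarrow> sat_rule J r)"

definition hard_count :: "'a lpmln \<Rightarrow> 'a set \<Rightarrow> nat" where
  "hard_count \<Pi> J = card {wr \<in> sat_part \<Pi> J. fst wr = Hard}"

text \<open>Hard rules contribute nothing here, since \<open>wval 0 Hard = 0\<close>.\<close>
definition soft_weight :: "'a lpmln \<Rightarrow> 'a set \<Rightarrow> real" where
  "soft_weight \<Pi> J = (\<Sum>wr\<in>sat_part \<Pi> J. wval 0 (fst wr))"

lemma SM_supported: "J \<in> SM \<Pi> \<Longrightarrow> a \<in> J \<Longrightarrow> \<exists>(w, r)\<in>\<Pi>. head r = Some a \<and> sat_body J r"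
  using stable_model_supported unfolding SM_def sat_part_def by force

lemma SM_if_well_supported:
  assumes "wf E"
    and "\<And>a. a \<in> J \<Longrightarrow> \<exists>(w, r)\<in>\<Pi>. head r = Some a \<and> sat_body J r \<and> (\<forall>b\<in>pos r. (b, a) \<in> E)"
  shows "J \<in> SM \<Pi>"
  unfolding SM_def
proof (intro CollectI stable_model_if_well_supported[OF _ assms(1)])
  show "is_model J (snd ` sat_part \<Pi> J)"
    unfolding is_model_def sat_part_def by auto
  fix a assume "a \<in> J"
  then obtain w r where "(w, r) \<in> \<Pi>" and r: "head r = Some a" "sat_body J r" "\<forall>b\<in>pos r. (b, a) \<in> E"
    using assms(2) by blast
  moreover from r \<open>a \<in> J\<close> have "sat_rule J r"
    by (simp add: sat_rule_def)
  ultimately show "\<exists>r\<in>snd ` sat_part \<Pi> J. head r = Some a \<and> sat_body J r \<and> (\<forall>b\<in>pos r. (b, a) \<in> E)"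
    unfolding sat_part_def by force
qed

lemma SM_subset_Pow_heads: "SM \<Pi> \<subseteq> Pow (\<Union>(w, r)\<in>\<Pi>. set_option (head r))"
  using SM_supported by fastforce

lemma finite_SM: "finite \<Pi> \<Longrightarrow> finite (SM \<Pi>)"
  by (rule finite_subset[OF SM_subset_Pow_heads]) auto

lemma finite_sat_part: "finite \<Pi> \<Longrightarrow> finite (sat_part \<Pi> J)"
  unfolding sat_part_def by simp

lemma W_eq_exp:
  assumes "finite \<Pi>" and "J \<in> SM \<Pi>"
  shows "W \<Pi> \<alpha> J = exp (\<alpha> * hard_count \<Pi> J + soft_weight \<Pi> J)"
proof -
  have "wval \<alpha> w = \<alpha> * of_bool (w = Hard) + wval 0 w" for w
    by (cases w) simp_all
  then have "(\<Sum>wr\<in>sat_part \<Pi> J. wval \<alpha> (fst wr)) =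
      \<alpha> * (\<Sum>wr\<in>sat_part \<Pi> J. of_bool (fst wr = Hard)) + soft_weight \<Pi> J"
    by (simp add: soft_weight_def sum.distrib sum_distrib_left)
  also have "(\<Sum>wr\<in>sat_part \<Pi> J. of_bool (fst wr = Hard)) = real (hard_count \<Pi> J)"
    using finite_sat_part[OF assms(1)] by (simp add: hard_count_def Int_def conj_commute)
  finally show ?thesis
    using assms(2) by (simp add: W_def)
qed

lemma hard_count_le: "finite \<Pi> \<Longrightarrow> hard_count \<Pi> J \<le> card {wr \<in> \<Pi>. fst wr = Hard}"
  unfolding hard_count_def sat_part_def by (rule card_mono) auto

lemma hard_count_eq_iff:
  assumes "finite \<Pi>"
  shows "hard_count \<Pi> J = card {wr \<in> \<Pi>. fst wr = Hard} \<longleftrightarrow> sat_hard \<Pi> J"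
proof -
  have "{wr \<in> sat_part \<Pi> J. fst wr = Hard} \<subseteq> {wr \<in> \<Pi>. fst wr = Hard}"
    unfolding sat_part_def by auto
  moreover have "finite {wr \<in> \<Pi>. fst wr = Hard}"
    using assms by simp
  ultimately have "hard_count \<Pi> J = card {wr \<in> \<Pi>. fst wr = Hard} \<longleftrightarrow>
      {wr \<in> sat_part \<Pi> J. fst wr = Hard} = {wr \<in> \<Pi>. fst wr = Hard}"
    unfolding hard_count_def by (auto dest: card_subset_eq)
  also have "\<dots> \<longleftrightarrow> sat_hard \<Pi> J"
    unfolding sat_hard_def sat_part_def by (simp add: set_eq_iff) blast
  finally show ?thesis .
qed

lemma P_eq_if_sat_hard_satisfiable:
  assumes "finite \<Pi>" and "\<exists>K\<in>SM \<Pi>. sat_hard \<Pi> K"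
  shows "P \<Pi> J = (if J \<in> SM \<Pi> \<and> sat_hard \<Pi> J
    then exp (soft_weight \<Pi> J) / (\<Sum>K\<in>{K \<in> SM \<Pi>. sat_hard \<Pi> K}. exp (soft_weight \<Pi> K)) else 0)"
proof (cases "J \<in> SM \<Pi>")
  case False
  then have "(\<lambda>\<alpha>. W \<Pi> \<alpha> J / (\<Sum>K\<in>SM \<Pi>. W \<Pi> \<alpha> K)) = (\<lambda>\<alpha>. 0)"
    by (simp add: W_def)
  with False show ?thesis
    unfolding P_def by (simp add: tendsto_Lim)
next
  case True
  let ?N = "card {wr \<in> \<Pi>. fst wr = Hard}"
  have "\<exists>K\<in>SM \<Pi>. real (hard_count \<Pi> K) = real ?N"
    using assms(2) hard_count_eq_iff[OF assms(1)] by auto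
  then have "((\<lambda>\<alpha>. exp (\<alpha> * real (hard_count \<Pi> J) + soft_weight \<Pi> J) /
        (\<Sum>K\<in>SM \<Pi>. exp (\<alpha> * real (hard_count \<Pi> K) + soft_weight \<Pi> K))) \<longlongrightarrow>
      (if real (hard_count \<Pi> J) = real ?N then exp (soft_weight \<Pi> J) else 0) /
      (\<Sum>K\<in>{K \<in> SM \<Pi>. real (hard_count \<Pi> K) = real ?N}. exp (soft_weight \<Pi> K))) at_top"
    using hard_count_le[OF assms(1)] by (intro tendsto_softmax_at_top finite_SM assms(1) True) auto
  moreover have "W \<Pi> \<alpha> K = exp (\<alpha> * real (hard_count \<Pi> K) + soft_weight \<Pi> K)" if "K \<in> SM \<Pi>" for \<alpha> K
    using W_eq_exp[OF assms(1) that] .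
  ultimately have "((\<lambda>\<alpha>. W \<Pi> \<alpha> J / (\<Sum>K\<in>SM \<Pi>. W \<Pi> \<alpha> K)) \<longlongrightarrow>
      (if sat_hard \<Pi> J then exp (soft_weight \<Pi> J) else 0) /
      (\<Sum>K\<in>{K \<in> SM \<Pi>. sat_hard \<Pi> K}. exp (soft_weight \<Pi> K))) at_top"
    using True by (simp add: hard_count_eq_iff[OF assms(1)] cong: sum.cong)
  then show ?thesis
    unfolding P_def using True by (simp add: tendsto_Lim)
qed

section \<open>The chain rule for Boolean Bayesian networks\<close>

lemma acyclic_parents_ex_sink:
  assumes "finite Vs" and "Vs \<noteq> {}" and "\<forall>v\<in>Vs. set (par v) \<subseteq> Vs"
    and "acyclic {(u, v). v \<in> Vs \<and> u \<in> set (par v)}"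
  shows "\<exists>z\<in>Vs. \<forall>v\<in>Vs. z \<notin> set (par v)"
proof -
  let ?E = "{(u, v). v \<in> Vs \<and> u \<in> set (par v)}"
  have "?E \<subseteq> Vs \<times> Vs"
    using assms(3) by auto
  then have "finite ?E"
    using assms(1) by (simp add: finite_subset)
  then have wf: "wf (?E\<inverse>)"
    using assms(4) by (rule finite_acyclic_wf_converse)
  obtain z0 where "z0 \<in> Vs"
    using assms(2) by blast
  obtain z where "z \<in> Vs" and "\<And>y. (y, z) \<in> ?E\<inverse> \<Longrightarrow> y \<notin> Vs"
    by (rule wfE_min[OF wf \<open>z0 \<in> Vs\<close>]) (rule that)
  then show ?thesis by blast
qed

lemma bn_prob_remove_sink:
  assumes "finite Vs" and "z \<in> Vs" and "\<forall>v\<in>Vs. z \<notin> set (par v)" and "z \<notin> I"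
  shows "bn_prob Vs par cpt I + bn_prob Vs par cpt (insert z I) = bn_prob (Vs - {z}) par cpt I"
proof -
  let ?f = "\<lambda>I v. let p = cpt v (map (\<lambda>u. u \<in> I) (par v)) in if v \<in> I then p else 1 - p"
  have same_parents: "map (\<lambda>u. u \<in> insert z I) (par v) = map (\<lambda>u. u \<in> I) (par v)" if "v \<in> Vs" for v
    using assms(3) that by auto
  have "?f (insert z I) v = ?f I v" if "v \<in> Vs - {z}" for v
    using that unfolding same_parents[of v, OF DiffD1[OF that]] by simp
  then have rest: "prod (?f (insert z I)) (Vs - {z}) = bn_prob (Vs - {z}) par cpt I"
    unfolding bn_prob_def by (rule prod.cong[OF refl])
  have restI: "prod (?f I) (Vs - {z}) = bn_prob (Vs - {z}) par cpt I"
    unfolding bn_prob_def ..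
  have factor_z: "?f I z + ?f (insert z I) z = 1"
    using assms(4) unfolding same_parents[OF assms(2)] by (simp add: Let_def)
  have split: "bn_prob Vs par cpt J = ?f J z * prod (?f J) (Vs - {z})" for J
    unfolding bn_prob_def using assms(1,2) by (rule prod.remove)
  have "bn_prob Vs par cpt I + bn_prob Vs par cpt (insert z I) =
      ?f I z * prod (?f I) (Vs - {z}) + ?f (insert z I) z * prod (?f (insert z I)) (Vs - {z})"
    by (simp only: split)
  also have "\<dots> = (?f I z + ?f (insert z I) z) * bn_prob (Vs - {z}) par cpt I"
    by (simp only: restI rest distrib_right)
  finally show ?thesis
    by (simp only: factor_z mult_1)
qed

lemma bn_prob_sum_eq_1:
  assumes "finite Vs" and "\<forall>v\<in>Vs. set (par v) \<subseteq> Vs"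
    and "acyclic {(u, v). v \<in> Vs \<and> u \<in> set (par v)}"
  shows "(\<Sum>I\<in>Pow Vs. bn_prob Vs par cpt I) = 1"
  using assms
proof (induction Vs rule: finite_psubset_induct)
  case (psubset Vs)
  show ?case
  proof (cases "Vs = {}")
    case True
    then show ?thesis by (simp add: bn_prob_def)
  next
    case False
    then obtain z where z: "z \<in> Vs" and sink: "\<forall>v\<in>Vs. z \<notin> set (par v)"
      using acyclic_parents_ex_sink[OF psubset.hyps(1) False psubset.prems] by blast
    let ?V = "Vs - {z}"
    have "(\<Sum>I\<in>Pow Vs. bn_prob Vs par cpt I) =
        (\<Sum>I\<in>Pow ?V. bn_prob Vs par cpt I + bn_prob Vs par cpt (insert z I))"
      using sum_Pow_insert[of ?V z, unfolded insert_Diff[OF z]] psubset.hyps(1) by simp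
    also have "\<dots> = (\<Sum>I\<in>Pow ?V. bn_prob ?V par cpt I)"
      using psubset.hyps(1) z sink by (intro sum.cong refl bn_prob_remove_sink) auto
    also have "\<dots> = 1"
    proof (rule psubset.IH)
      show "?V \<subset> Vs" using z by blast
      show "\<forall>v\<in>?V. set (par v) \<subseteq> ?V" using psubset.prems(1) sink by blast
      show "acyclic {(u, v). v \<in> ?V \<and> u \<in> set (par v)}"
        by (rule acyclic_subset[OF psubset.prems(2)]) auto
    qed
    finally show ?thesis .
  qed
qed

abbreviation pf :: "'v \<times> bool list \<Rightarrow> 'v bnatom" where
  "pf \<equiv> case_prod PF"

definition bn_interp :: "'v set \<Rightarrow> ('v \<times> bool list) set \<Rightarrow> 'v bnatom set" where
  "bn_interp I G = RV ` I \<union> pf ` G"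

lemma pf_eq_iff [simp]: "pf x = pf y \<longleftrightarrow> x = y"
  by (cases x; cases y) simp

lemma pf_neq_RV [simp]: "pf x \<noteq> RV v"
  by (cases x) simp

lemma inj_pf: "inj pf"
  by (simp add: inj_def)

lemma RV_in_bn_interp [simp]: "RV v \<in> bn_interp I G \<longleftrightarrow> v \<in> I"
  unfolding bn_interp_def by auto

lemma pf_in_bn_interp [simp]: "pf x \<in> bn_interp I G \<longleftrightarrow> x \<in> G"
  unfolding bn_interp_def by (auto simp: inj_image_mem_iff[OF inj_pf])

lemma PF_in_bn_interp [simp]: "PF v S \<in> bn_interp I G \<longleftrightarrow> (v, S) \<in> G"
  using pf_in_bn_interp[of "(v, S)"] by simp

lemma bn_interp_eq_iff: "bn_interp I G = bn_interp I' G' \<longleftrightarrow> I = I' \<and> G = G'"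
proof
  assume "bn_interp I G = bn_interp I' G'"
  then have "RV v \<in> bn_interp I G \<longleftrightarrow> RV v \<in> bn_interp I' G'" and "pf x \<in> bn_interp I G \<longleftrightarrow> pf x \<in> bn_interp I' G'"
    for v x by simp_all
  then show "I = I' \<and> G = G'" by auto
qed simp

lemma mem_pf_rules:
  assumes "0 \<le> p" and "p \<le> 1"
  shows "(w, r) \<in> pf_rules v S p \<longleftrightarrow>
    0 < p \<and> w = (if p = 1 then Hard else Soft (ln (p / (1 - p)))) \<and> r = Rule (Some (PF v S)) {} {} \<or>
    p = 0 \<and> w = Hard \<and> r = Rule None {PF v S} {}"
  using assms unfolding pf_rules_def by auto

lemma map_eq_iff_zip: "length ys = length xs \<Longrightarrow> ys = map f xs \<longleftrightarrow> (\<forall>(x, y)\<in>set (zip xs ys). y = f x)"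
  by (induction xs arbitrary: ys) (auto simp: length_Suc_conv zip_map2 zip_same_conv_map)

lemma sat_body_cpt_rule:
  assumes "length S = length (par v)"
  shows "sat_body J (cpt_rule par v S) \<longleftrightarrow> PF v S \<in> J \<and> S = map (\<lambda>u. RV u \<in> J) (par v)"
proof -
  let ?Z = "set (zip (par v) S)"
  have "sat_body J (cpt_rule par v S) \<longleftrightarrow>
      PF v S \<in> J \<and> (\<forall>u. (u, True) \<in> ?Z \<longrightarrow> RV u \<in> J) \<and> (\<forall>u. (u, False) \<in> ?Z \<longrightarrow> RV u \<notin> J)"
    unfolding sat_body_def cpt_rule_def by auto
  also have "(\<forall>u. (u, True) \<in> ?Z \<longrightarrow> RV u \<in> J) \<and> (\<forall>u. (u, False) \<in> ?Z \<longrightarrow> RV u \<notin> J) \<longleftrightarrow>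
      (\<forall>(u, b)\<in>?Z. b = (RV u \<in> J))"
    by (auto simp: all_bool_eq split_paired_Ball_Sigma) (metis (full_types))
  finally show ?thesis
    using map_eq_iff_zip[OF assms] by simp
qed

lemma head_cpt_rule [simp]: "head (cpt_rule par v S) = Some (RV v)"
  by (simp add: cpt_rule_def)

lemma sat_rule_fact [simp]: "sat_rule J (Rule (Some a) {} {}) \<longleftrightarrow> a \<in> J"
  by (simp add: sat_rule_def sat_body_def)

lemma sat_rule_constraint [simp]: "sat_rule J (Rule None {a} {}) \<longleftrightarrow> a \<notin> J"
  by (simp add: sat_rule_def sat_body_def)

locale bayes_net =
  fixes Vs :: "'v set" and par :: "'v \<Rightarrow> 'v list" and cpt :: "'v \<Rightarrow> bool list \<Rightarrow> real"
  assumes bn_wf: "bn_wf Vs par cpt"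
begin

abbreviation \<Pi>\<^sub>B :: "'v bnatom lpmln" where
  "\<Pi>\<^sub>B \<equiv> bn_translation Vs par cpt"

abbreviation prob :: "'v \<times> bool list \<Rightarrow> real" where
  "prob \<equiv> case_prod cpt"

definition entries :: "('v \<times> bool list) set" where
  "entries = {(v, S). v \<in> Vs \<and> length S = length (par v)}"

definition entry_of :: "'v set \<Rightarrow> 'v \<Rightarrow> 'v \<times> bool list" where
  "entry_of I v = (v, map (\<lambda>u. u \<in> I) (par v))"

lemma finite_Vs: "finite Vs"
  using bn_wf unfolding bn_wf_def by blast

lemma parents_subset: "v \<in> Vs \<Longrightarrow> set (par v) \<subseteq> Vs"
  using bn_wf unfolding bn_wf_def by blast

lemma acyclic_parents: "acyclic {(u, v). v \<in> Vs \<and> u \<in> set (par v)}"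
  using bn_wf unfolding bn_wf_def by blast

lemma wf_parents: "wf {(u, v). v \<in> Vs \<and> u \<in> set (par v)}"
proof (rule finite_acyclic_wf[OF _ acyclic_parents])
  have "{(u, v). v \<in> Vs \<and> u \<in> set (par v)} \<subseteq> Vs \<times> Vs"
    using parents_subset by auto
  then show "finite {(u, v). v \<in> Vs \<and> u \<in> set (par v)}"
    using finite_Vs by (simp add: finite_subset)
qed

lemma cpt_bounds: "(v, S) \<in> entries \<Longrightarrow> 0 \<le> cpt v S \<and> cpt v S \<le> 1"
  using bn_wf unfolding bn_wf_def entries_def by auto

lemma finite_entries: "finite entries"
proof -
  have "entries = Sigma Vs (\<lambda>v. {S. length S = length (par v)})"
    unfolding entries_def by auto
  then show ?thesis
    using finite_Vs finite_lists_length_eq[of "UNIV :: bool set"] by simp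
qed

lemma entry_of_in_entries: "v \<in> Vs \<Longrightarrow> entry_of I v \<in> entries"
  unfolding entry_of_def entries_def by simp

lemma entry_of_eq_iff [simp]: "entry_of I u = entry_of I v \<longleftrightarrow> u = v"
  by (auto simp: entry_of_def)

lemma entry_of_in_image_iff [simp]: "entry_of I v \<in> entry_of I ` A \<longleftrightarrow> v \<in> A"
  by auto

lemma translation_cases:
  assumes "(w, r) \<in> \<Pi>\<^sub>B"
  obtains (cpt) v S where "(v, S) \<in> entries" and "w = Hard" and "r = cpt_rule par v S"
  | (fact) v S where "(v, S) \<in> entries" and "0 < cpt v S"
      and "w = (if cpt v S = 1 then Hard else Soft (ln (cpt v S / (1 - cpt v S))))"
      and "r = Rule (Some (PF v S)) {} {}"
  | (constraint) v S where "(v, S) \<in> entries" and "cpt v S = 0" and "w = Hard" and "r = Rule None {PF v S} {}"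
proof -
  obtain v S where vS: "(v, S) \<in> entries" and "(w, r) = (Hard, cpt_rule par v S) \<or> (w, r) \<in> pf_rules v S (cpt v S)"
    using assms unfolding bn_translation_def entries_def by blast
  from this(2) show thesis
  proof
    assume "(w, r) = (Hard, cpt_rule par v S)"
    with vS show thesis by (intro that(1)) auto
  next
    assume "(w, r) \<in> pf_rules v S (cpt v S)"
    then have "0 < cpt v S \<and> w = (if cpt v S = 1 then Hard else Soft (ln (cpt v S / (1 - cpt v S))))
        \<and> r = Rule (Some (PF v S)) {} {} \<or> cpt v S = 0 \<and> w = Hard \<and> r = Rule None {PF v S} {}"
      using cpt_bounds[OF vS] by (simp only: mem_pf_rules)
    with vS that(2,3) show thesis by blast
  qed
qed

lemma cpt_rule_in_translation: "(v, S) \<in> entries \<Longrightarrow> (Hard, cpt_rule par v S) \<in> \<Pi>\<^sub>B"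
  unfolding bn_translation_def entries_def by blast

lemma fact_in_translation:
  assumes "(v, S) \<in> entries" and "0 < cpt v S"
  shows "(if cpt v S = 1 then Hard else Soft (ln (cpt v S / (1 - cpt v S))), Rule (Some (PF v S)) {} {}) \<in> \<Pi>\<^sub>B"
proof -
  have "(if cpt v S = 1 then Hard else Soft (ln (cpt v S / (1 - cpt v S))), Rule (Some (PF v S)) {} {})
      \<in> pf_rules v S (cpt v S)"
    using assms cpt_bounds[OF assms(1)] by (simp add: mem_pf_rules)
  then show ?thesis
    using assms(1) unfolding bn_translation_def entries_def by blast
qed

lemma finite_translation: "finite \<Pi>\<^sub>B"
  unfolding bn_translation_def using finite_entries
  by (intro finite_UN_I) (auto simp: entries_def pf_rules_def)

lemma lp_atoms_translation: "lp_atoms \<Pi>\<^sub>B = RV ` Vs \<union> pf ` entries"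
proof (intro equalityI subsetI)
  fix a assume "a \<in> lp_atoms \<Pi>\<^sub>B"
  then obtain w r where wr: "(w, r) \<in> \<Pi>\<^sub>B" and a: "a \<in> set_option (head r) \<union> pos r \<union> neg r"
    unfolding lp_atoms_def by blast
  from wr show "a \<in> RV ` Vs \<union> pf ` entries"
  proof (cases rule: translation_cases)
    case (cpt v S)
    then have "v \<in> Vs" and "set (par v) \<subseteq> Vs"
      using parents_subset unfolding entries_def by auto
    with a cpt show ?thesis
      unfolding cpt_rule_def by (force dest: set_zip_leftD)
  qed (use a in force)+
next
  fix a assume "a \<in> RV ` Vs \<union> pf ` entries"
  then have "\<exists>(v, S)\<in>entries. a = RV v \<or> a = PF v S"
    using entry_of_in_entries[of _ "{}"] unfolding entry_of_def by fastforce
  then obtain v S where vS: "(v, S) \<in> entries" and "a = RV v \<or> a = PF v S"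
    by blast
  then have "a \<in> set_option (head (cpt_rule par v S)) \<union> pos (cpt_rule par v S)"
    unfolding cpt_rule_def by auto
  then show "a \<in> lp_atoms \<Pi>\<^sub>B"
    using cpt_rule_in_translation[OF vS] unfolding lp_atoms_def by blast
qed

lemma bn_interp_subset_lp_atoms: "I \<subseteq> Vs \<Longrightarrow> G \<subseteq> entries \<Longrightarrow> bn_interp I G \<subseteq> lp_atoms \<Pi>\<^sub>B"
  unfolding lp_atoms_translation bn_interp_def by (intro Un_mono image_mono)

lemma eq_bn_interp_if_subset_lp_atoms:
  assumes "J \<subseteq> lp_atoms \<Pi>\<^sub>B"
  shows "J = bn_interp {v. RV v \<in> J} {x \<in> entries. pf x \<in> J}"
proof (intro equalityI subsetI)
  fix a assume a: "a \<in> J"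
  then consider v where "a = RV v" | x where "x \<in> entries" and "a = pf x"
    using assms unfolding lp_atoms_translation by blast
  then show "a \<in> bn_interp {v. RV v \<in> J} {x \<in> entries. pf x \<in> J}"
    using a by cases simp_all
qed (auto simp: bn_interp_def)

lemma RV_in_lp_atoms: "RV v \<in> lp_atoms \<Pi>\<^sub>B \<longleftrightarrow> v \<in> Vs"
  unfolding lp_atoms_translation by (auto simp: image_iff dest: sym)

lemma lp_atoms_fibre:
  assumes "I \<subseteq> Vs"
  shows "{J. J \<subseteq> lp_atoms \<Pi>\<^sub>B \<and> {v. RV v \<in> J} = I} = bn_interp I ` Pow entries"
proof (intro equalityI subsetI)
  fix J assume "J \<in> {J. J \<subseteq> lp_atoms \<Pi>\<^sub>B \<and> {v. RV v \<in> J} = I}"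
  then have "J = bn_interp I {x \<in> entries. pf x \<in> J}"
    using eq_bn_interp_if_subset_lp_atoms by auto
  then show "J \<in> bn_interp I ` Pow entries"
    by blast
next
  fix J assume "J \<in> bn_interp I ` Pow entries"
  then obtain G where "G \<subseteq> entries" and "J = bn_interp I G"
    by blast
  then show "J \<in> {J. J \<subseteq> lp_atoms \<Pi>\<^sub>B \<and> {v. RV v \<in> J} = I}"
    using bn_interp_subset_lp_atoms[OF assms] by simp
qed

lemma Pow_lp_atoms: "Pow (lp_atoms \<Pi>\<^sub>B) = case_prod bn_interp ` (Pow Vs \<times> Pow entries)"
proof (intro equalityI subsetI)
  fix J assume J: "J \<in> Pow (lp_atoms \<Pi>\<^sub>B)"
  let ?I = "{v. RV v \<in> J}"
  have I: "?I \<subseteq> Vs"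
  proof
    fix v assume "v \<in> ?I"
    with J have "RV v \<in> lp_atoms \<Pi>\<^sub>B" by auto
    then show "v \<in> Vs" by (simp add: RV_in_lp_atoms)
  qed
  have "J \<in> bn_interp ?I ` Pow entries"
    unfolding lp_atoms_fibre[OF I, symmetric] using J by simp
  then obtain G where "G \<in> Pow entries" and "J = bn_interp ?I G"
    by (elim imageE)
  with I show "J \<in> case_prod bn_interp ` (Pow Vs \<times> Pow entries)"
    by (intro image_eqI[of _ _ "(?I, G)"]) simp_all
next
  fix J assume "J \<in> case_prod bn_interp ` (Pow Vs \<times> Pow entries)"
  then obtain I G where "I \<subseteq> Vs" and "G \<subseteq> entries" and "J = bn_interp I G"
    by blast
  then show "J \<in> Pow (lp_atoms \<Pi>\<^sub>B)"
    using bn_interp_subset_lp_atoms by simp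
qed

section \<open>Stable models of the translation\<close>

definition agrees :: "'v set \<Rightarrow> ('v \<times> bool list) set \<Rightarrow> bool" where
  "agrees I G \<longleftrightarrow> (\<forall>v\<in>Vs. entry_of I v \<in> G \<longleftrightarrow> v \<in> I)"

definition entries_prob :: "('v \<times> bool list) set \<Rightarrow> real" where
  "entries_prob G = (\<Prod>x\<in>entries. if x \<in> G then prob x else 1 - prob x)"

lemma prob_bounds: "x \<in> entries \<Longrightarrow> 0 \<le> prob x \<and> prob x \<le> 1"
  using cpt_bounds by (cases x) simp

lemma entries_prob_neq_0_iff:
  assumes "G \<subseteq> entries"
  shows "entries_prob G \<noteq> 0 \<longleftrightarrow> (\<forall>x\<in>G. prob x \<noteq> 0) \<and> (\<forall>x\<in>entries - G. prob x \<noteq> 1)"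
proof -
  have "entries_prob G = 0 \<longleftrightarrow> (\<exists>x\<in>entries. x \<in> G \<and> prob x = 0 \<or> x \<notin> G \<and> prob x = 1)"
    unfolding entries_prob_def prod_zero_iff[OF finite_entries] by (intro bex_cong refl) auto
  then show ?thesis
    using assms by blast
qed

lemma sat_body_cpt_rule_interp:
  "(v, S) \<in> entries \<Longrightarrow> sat_body (bn_interp I G) (cpt_rule par v S) \<longleftrightarrow> (v, S) \<in> G \<and> (v, S) = entry_of I v"
  unfolding entry_of_def entries_def by (auto simp: sat_body_cpt_rule)

lemma translation_head_RV:
  assumes "(w, r) \<in> \<Pi>\<^sub>B" and "head r = Some (RV v)"
  shows "\<exists>S. (v, S) \<in> entries \<and> r = cpt_rule par v S"
  using assms(1) by (cases rule: translation_cases) (use assms(2) in auto)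

lemma translation_head_PF:
  assumes "(w, r) \<in> \<Pi>\<^sub>B" and "head r = Some (PF v S)"
  shows "0 < cpt v S"
  using assms(1) by (cases rule: translation_cases) (use assms(2) in auto)

lemma agrees_if_SM_sat_hard:
  assumes SM: "bn_interp I G \<in> SM \<Pi>\<^sub>B" and hard: "sat_hard \<Pi>\<^sub>B (bn_interp I G)"
  shows "agrees I G"
  unfolding agrees_def
proof (intro ballI iffI)
  fix v assume v: "v \<in> Vs" and "entry_of I v \<in> G"
  obtain S where S: "entry_of I v = (v, S)"
    unfolding entry_of_def by simp
  then have vS: "(v, S) \<in> entries"
    using entry_of_in_entries[of v I] v by simp
  have "sat_body (bn_interp I G) (cpt_rule par v S)"
    using \<open>entry_of I v \<in> G\<close> S sat_body_cpt_rule_interp[OF vS] by simp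
  moreover have "sat_rule (bn_interp I G) (cpt_rule par v S)"
    using hard cpt_rule_in_translation[OF vS] unfolding sat_hard_def by auto
  ultimately show "v \<in> I"
    unfolding sat_rule_def by simp
next
  fix v assume "v \<in> I"
  then obtain w r where "(w, r) \<in> \<Pi>\<^sub>B" "head r = Some (RV v)" and body: "sat_body (bn_interp I G) r"
    using SM_supported[OF SM, of "RV v"] by auto
  then obtain S where "(v, S) \<in> entries" "r = cpt_rule par v S"
    using translation_head_RV by blast
  with body show "entry_of I v \<in> G"
    using sat_body_cpt_rule_interp by auto
qed

lemma entries_prob_neq_0_if_SM_sat_hard:
  assumes G: "G \<subseteq> entries" and SM: "bn_interp I G \<in> SM \<Pi>\<^sub>B" and hard: "sat_hard \<Pi>\<^sub>B (bn_interp I G)"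
  shows "entries_prob G \<noteq> 0"
  unfolding entries_prob_neq_0_iff[OF G]
proof (intro conjI ballI)
  fix x assume "x \<in> G"
  then show "prob x \<noteq> 0"
    using SM_supported[OF SM, of "pf x"] by (cases x) (force dest: translation_head_PF)
next
  fix x assume x: "x \<in> entries - G"
  obtain v S where x_eq: "x = (v, S)"
    by (cases x)
  show "prob x \<noteq> 1"
  proof
    assume "prob x = 1"
    then have "(Hard, Rule (Some (PF v S)) {} {}) \<in> \<Pi>\<^sub>B"
      using fact_in_translation[of v S] x x_eq by simp
    then have "PF v S \<in> bn_interp I G"
      using hard unfolding sat_hard_def by fastforce
    with x x_eq show False by simp
  qed
qed

lemma sat_hard_if_agrees:
  assumes "agrees I G" and "\<forall>x\<in>G. prob x \<noteq> 0" and "\<forall>x\<in>entries - G. prob x \<noteq> 1"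
  shows "sat_hard \<Pi>\<^sub>B (bn_interp I G)"
proof -
  have "sat_rule (bn_interp I G) r" if "(w, r) \<in> \<Pi>\<^sub>B" and "w = Hard" for w r
    using that(1)
  proof (cases rule: translation_cases)
    case (cpt v S)
    have "v \<in> I" if "sat_body (bn_interp I G) (cpt_rule par v S)"
    proof -
      have "entry_of I v \<in> G"
        using that sat_body_cpt_rule_interp[OF cpt(1)] by auto
      moreover have "v \<in> Vs"
        using cpt(1) unfolding entries_def by simp
      ultimately show ?thesis
        using assms(1) unfolding agrees_def by blast
    qed
    with cpt show ?thesis
      unfolding sat_rule_def by simp
  next
    case (fact v S)
    then have "cpt v S = 1"
      using \<open>w = Hard\<close> by (auto split: if_splits)
    with fact(1) assms(3)[rule_format, of "(v, S)"] have "(v, S) \<in> G"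
      by auto
    with fact show ?thesis by simp
  next
    case (constraint v S)
    with assms(2)[rule_format, of "(v, S)"] show ?thesis by auto
  qed
  then show ?thesis
    unfolding sat_hard_def by blast
qed

definition atom_order :: "('v bnatom \<times> 'v bnatom) set" where
  "atom_order = inv_image (less_than <*lex*> {(u, v). v \<in> Vs \<and> u \<in> set (par v)})
    (\<lambda>a. case a of RV v \<Rightarrow> (1::nat, v) | PF v S \<Rightarrow> (0, v))"

lemma wf_atom_order: "wf atom_order"
  unfolding atom_order_def by (intro wf_inv_image wf_lex_prod wf_less_than wf_parents)

lemma pos_cpt_rule_below: "v \<in> Vs \<Longrightarrow> b \<in> pos (cpt_rule par v S) \<Longrightarrow> (b, RV v) \<in> atom_order"
  unfolding atom_order_def cpt_rule_def by (auto dest: set_zip_leftD)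

lemma interp_in_SM_if_agrees:
  assumes I: "I \<subseteq> Vs" and G: "G \<subseteq> entries" and "agrees I G" and "\<forall>x\<in>G. prob x \<noteq> 0"
  shows "bn_interp I G \<in> SM \<Pi>\<^sub>B"
proof (rule SM_if_well_supported[OF wf_atom_order])
  fix a assume "a \<in> bn_interp I G"
  then consider v where "v \<in> I" and "a = RV v" | v S where "(v, S) \<in> G" and "a = PF v S"
    unfolding bn_interp_def by auto
  then show "\<exists>(w, r)\<in>\<Pi>\<^sub>B. head r = Some a \<and> sat_body (bn_interp I G) r \<and> (\<forall>b\<in>pos r. (b, a) \<in> atom_order)"
  proof cases
    case (1 v)
    obtain S where S: "entry_of I v = (v, S)"
      unfolding entry_of_def by simp
    have v: "v \<in> Vs"
      using 1 I by blast
    then have vS: "(v, S) \<in> entries"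
      using entry_of_in_entries[of v I] S by simp
    have "entry_of I v \<in> G"
      using \<open>agrees I G\<close> 1 v unfolding agrees_def by blast
    then have "sat_body (bn_interp I G) (cpt_rule par v S)"
      using S sat_body_cpt_rule_interp[OF vS] by simp
    with 1 show ?thesis
      using cpt_rule_in_translation[OF vS] pos_cpt_rule_below[OF v]
      by (intro bexI[of _ "(Hard, cpt_rule par v S)"]) auto
  next
    case (2 v S)
    then have "0 < cpt v S"
      using assms(4) cpt_bounds[of v S] G by fastforce
    with 2 G show ?thesis
      using fact_in_translation[of v S] by (force simp: sat_body_def)
  qed
qed

lemma SM_sat_hard_iff:
  assumes "I \<subseteq> Vs" and "G \<subseteq> entries"
  shows "bn_interp I G \<in> SM \<Pi>\<^sub>B \<and> sat_hard \<Pi>\<^sub>B (bn_interp I G) \<longleftrightarrow> agrees I G \<and> entries_prob G \<noteq> 0"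
proof
  assume "bn_interp I G \<in> SM \<Pi>\<^sub>B \<and> sat_hard \<Pi>\<^sub>B (bn_interp I G)"
  then show "agrees I G \<and> entries_prob G \<noteq> 0"
    using agrees_if_SM_sat_hard entries_prob_neq_0_if_SM_sat_hard[OF assms(2)] by blast
next
  assume "agrees I G \<and> entries_prob G \<noteq> 0"
  then have "agrees I G" and "\<forall>x\<in>G. prob x \<noteq> 0" and "\<forall>x\<in>entries - G. prob x \<noteq> 1"
    using entries_prob_neq_0_iff[OF assms(2)] by auto
  then show "bn_interp I G \<in> SM \<Pi>\<^sub>B \<and> sat_hard \<Pi>\<^sub>B (bn_interp I G)"
    using sat_hard_if_agrees interp_in_SM_if_agrees[OF assms] by blast
qed

section \<open>Probabilities of the translation\<close>

definition soft_entries :: "('v \<times> bool list) set" where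
  "soft_entries = {x \<in> entries. 0 < prob x \<and> prob x < 1}"

definition soft_norm :: real where
  "soft_norm = (\<Prod>x\<in>soft_entries. 1 - prob x)"

lemma finite_soft_entries: "finite soft_entries"
  unfolding soft_entries_def using finite_entries by simp

lemma soft_norm_pos: "0 < soft_norm"
  unfolding soft_norm_def soft_entries_def by (rule prod_pos) auto

lemma soft_weight_translation:
  "soft_weight \<Pi>\<^sub>B J = (\<Sum>x\<in>{x \<in> soft_entries. pf x \<in> J}. ln (prob x / (1 - prob x)))"
proof -
  let ?soft = "\<lambda>x. (Soft (ln (prob x / (1 - prob x))), Rule (Some (pf x)) {} {})"
  have soft_part: "{wr \<in> sat_part \<Pi>\<^sub>B J. fst wr \<noteq> Hard} = ?soft ` {x \<in> soft_entries. pf x \<in> J}"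
  proof (intro equalityI subsetI)
    fix wr assume "wr \<in> {wr \<in> sat_part \<Pi>\<^sub>B J. fst wr \<noteq> Hard}"
    then obtain w r where wr: "wr = (w, r)" "(w, r) \<in> \<Pi>\<^sub>B" "w \<noteq> Hard" "sat_rule J r"
      unfolding sat_part_def by (cases wr) auto
    from wr(2) show "wr \<in> ?soft ` {x \<in> soft_entries. pf x \<in> J}"
    proof (cases rule: translation_cases)
      case (fact v S)
      with wr have "cpt v S \<noteq> 1"
        by auto
      with fact cpt_bounds[of v S] have "(v, S) \<in> soft_entries"
        unfolding soft_entries_def by auto
      with fact wr show ?thesis
        by (auto intro!: image_eqI[of _ _ "(v, S)"])
    qed (use wr in auto)
  next
    fix wr assume "wr \<in> ?soft ` {x \<in> soft_entries. pf x \<in> J}"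
    then obtain v S where vS: "(v, S) \<in> soft_entries" "PF v S \<in> J" and wr: "wr = ?soft (v, S)"
      by auto
    then have "wr \<in> \<Pi>\<^sub>B"
      using fact_in_translation[of v S] unfolding soft_entries_def by auto
    with vS wr show "wr \<in> {wr \<in> sat_part \<Pi>\<^sub>B J. fst wr \<noteq> Hard}"
      unfolding sat_part_def by simp
  qed
  have "soft_weight \<Pi>\<^sub>B J = (\<Sum>wr\<in>{wr \<in> sat_part \<Pi>\<^sub>B J. fst wr \<noteq> Hard}. wval 0 (fst wr))"
    unfolding soft_weight_def
    by (rule sum.mono_neutral_right) (auto simp: finite_sat_part[OF finite_translation])
  also have "\<dots> = (\<Sum>x\<in>{x \<in> soft_entries. pf x \<in> J}. ln (prob x / (1 - prob x)))"
    unfolding soft_part by (subst sum.reindex) (auto simp: inj_on_def)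
  finally show ?thesis .
qed

lemma entries_prob_eq_exp_soft_weight:
  assumes G: "G \<subseteq> entries" and "entries_prob G \<noteq> 0"
  shows "entries_prob G = soft_norm * exp (soft_weight \<Pi>\<^sub>B (bn_interp I G))"
proof -
  let ?q = "\<lambda>x. if x \<in> G then prob x else 1 - prob x"
  have nz: "\<forall>x\<in>G. prob x \<noteq> 0" "\<forall>x\<in>entries - G. prob x \<noteq> 1"
    using assms entries_prob_neq_0_iff by auto
  have "?q x = 1" if x: "x \<in> entries - soft_entries" for x
  proof -
    have "prob x = 0 \<or> prob x = 1"
      using x prob_bounds[of x] unfolding soft_entries_def by auto
    then show ?thesis
      using x bspec[OF nz(1), of x] bspec[OF nz(2), of x] by (cases "x \<in> G") auto
  qed
  then have "entries_prob G = prod ?q soft_entries"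
    unfolding entries_prob_def soft_entries_def
    by (subst prod.subset_diff[of soft_entries]) (auto simp: finite_entries soft_entries_def)
  also have "\<dots> = (\<Prod>x\<in>soft_entries. (1 - prob x) * (if x \<in> G then prob x / (1 - prob x) else 1))"
    by (rule prod.cong) (auto simp: soft_entries_def)
  also have "\<dots> = soft_norm * (\<Prod>x\<in>{x \<in> soft_entries. x \<in> G}. prob x / (1 - prob x))"
    unfolding soft_norm_def prod.distrib prod.inter_filter[OF finite_soft_entries] ..
  also have "(\<Prod>x\<in>{x \<in> soft_entries. x \<in> G}. prob x / (1 - prob x)) = exp (soft_weight \<Pi>\<^sub>B (bn_interp I G))"
    unfolding soft_weight_translation using finite_soft_entries
    by (simp add: exp_sum) (rule prod.cong, auto simp: soft_entries_def)
  finally show ?thesis .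
qed

lemma agrees_iff:
  assumes "I \<subseteq> Vs"
  shows "agrees I G \<longleftrightarrow> G \<inter> entry_of I ` Vs = entry_of I ` I"
proof
  assume "agrees I G"
  then show "G \<inter> entry_of I ` Vs = entry_of I ` I"
    using assms unfolding agrees_def by auto
next
  assume eq: "G \<inter> entry_of I ` Vs = entry_of I ` I"
  have "entry_of I v \<in> G \<longleftrightarrow> v \<in> I" if "v \<in> Vs" for v
  proof -
    have "entry_of I v \<in> G \<longleftrightarrow> entry_of I v \<in> G \<inter> entry_of I ` Vs"
      using that by blast
    also have "\<dots> \<longleftrightarrow> v \<in> I"
      unfolding eq by simp
    finally show ?thesis .
  qed
  then show "agrees I G"
    unfolding agrees_def by blast
qed

lemma sum_agrees_entries_prob:
  assumes "I \<subseteq> Vs"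
  shows "(\<Sum>G\<in>Pow entries. if agrees I G then entries_prob G else 0) = bn_prob Vs par cpt I"
proof -
  have "entry_of I ` Vs \<subseteq> entries"
    using entry_of_in_entries by blast
  then have "(\<Sum>G\<in>Pow entries. if agrees I G then entries_prob G else 0) =
      (\<Prod>x\<in>entry_of I ` Vs. if x \<in> entry_of I ` I then prob x else 1 - prob x)"
    unfolding agrees_iff[OF assms] entries_prob_def using assms
    by (intro sum_Pow_prod_marginal finite_entries) auto
  also have "\<dots> = bn_prob Vs par cpt I"
    unfolding bn_prob_def Let_def by (simp add: prod.reindex inj_on_def) (simp add: entry_of_def cong: if_cong)
  finally show ?thesis .
qed

lemma exp_soft_weight_interp:
  assumes "I \<subseteq> Vs" and "G \<subseteq> entries"
  shows "(if bn_interp I G \<in> SM \<Pi>\<^sub>B \<and> sat_hard \<Pi>\<^sub>B (bn_interp I G) then exp (soft_weight \<Pi>\<^sub>B (bn_interp I G)) else 0)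
    = (if agrees I G then entries_prob G else 0) / soft_norm"
  using SM_sat_hard_iff[OF assms] entries_prob_eq_exp_soft_weight[OF assms(2), of I] soft_norm_pos
  by auto

lemma sum_exp_soft_weight_translation: "(\<Sum>K\<in>{K \<in> SM \<Pi>\<^sub>B. sat_hard \<Pi>\<^sub>B K}. exp (soft_weight \<Pi>\<^sub>B K)) = 1 / soft_norm"
proof -
  let ?w = "\<lambda>K. if K \<in> SM \<Pi>\<^sub>B \<and> sat_hard \<Pi>\<^sub>B K then exp (soft_weight \<Pi>\<^sub>B K) else 0"
  have "SM \<Pi>\<^sub>B \<subseteq> Pow (lp_atoms \<Pi>\<^sub>B)"
    using SM_subset_Pow_heads[of \<Pi>\<^sub>B] unfolding lp_atoms_def by fastforce
  then have "(\<Sum>K\<in>{K \<in> SM \<Pi>\<^sub>B. sat_hard \<Pi>\<^sub>B K}. exp (soft_weight \<Pi>\<^sub>B K)) = sum ?w (Pow (lp_atoms \<Pi>\<^sub>B))"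
    using finite_Vs finite_entries
    by (intro sum.mono_neutral_cong_left) (auto simp: lp_atoms_translation)
  also have "\<dots> = sum ?w (case_prod bn_interp ` (Pow Vs \<times> Pow entries))"
    unfolding Pow_lp_atoms ..
  also have "\<dots> = (\<Sum>(I, G)\<in>Pow Vs \<times> Pow entries. ?w (bn_interp I G))"
    by (rule sum.reindex_cong[where l = "case_prod bn_interp"]) (auto simp: inj_on_def bn_interp_eq_iff)
  also have "\<dots> = (\<Sum>I\<in>Pow Vs. \<Sum>G\<in>Pow entries. ?w (bn_interp I G))"
    by (rule sum.cartesian_product[symmetric])
  also have "\<dots> = (\<Sum>I\<in>Pow Vs. \<Sum>G\<in>Pow entries. (if agrees I G then entries_prob G else 0) / soft_norm)"
    by (intro sum.cong refl exp_soft_weight_interp) auto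
  also have "\<dots> = (\<Sum>I\<in>Pow Vs. bn_prob Vs par cpt I) / soft_norm"
    by (simp add: sum_agrees_entries_prob flip: sum_divide_distrib)
  also have "(\<Sum>I\<in>Pow Vs. bn_prob Vs par cpt I) = 1"
    using bn_wf unfolding bn_wf_def by (intro bn_prob_sum_eq_1) auto
  finally show ?thesis .
qed

lemma P_translation_interp:
  assumes "I \<subseteq> Vs" and "G \<subseteq> entries"
  shows "P \<Pi>\<^sub>B (bn_interp I G) = (if agrees I G then entries_prob G else 0)"
proof -
  have "{K \<in> SM \<Pi>\<^sub>B. sat_hard \<Pi>\<^sub>B K} \<noteq> {}"
    using sum_exp_soft_weight_translation soft_norm_pos by force
  then have "P \<Pi>\<^sub>B (bn_interp I G) = soft_norm *
      (if bn_interp I G \<in> SM \<Pi>\<^sub>B \<and> sat_hard \<Pi>\<^sub>B (bn_interp I G) then exp (soft_weight \<Pi>\<^sub>B (bn_interp I G)) else 0)"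
    by (subst P_eq_if_sat_hard_satisfiable) (auto simp: finite_translation sum_exp_soft_weight_translation)
  also have "\<dots> = (if agrees I G then entries_prob G else 0)"
    using soft_norm_pos by (simp add: exp_soft_weight_interp[OF assms])
  finally show ?thesis .
qed

end

theorem mainTheorem6:
  fixes Vs :: "'v set" and par :: "'v \<Rightarrow> 'v list" and cpt :: "'v \<Rightarrow> bool list \<Rightarrow> real"
    and I :: "'v set"
  assumes "bn_wf Vs par cpt"
    and "I \<subseteq> Vs"
  shows "bn_prob Vs par cpt I =
    (\<Sum>J\<in>{J. J \<subseteq> lp_atoms (bn_translation Vs par cpt) \<and> {v. RV v \<in> J} = I}.
        P (bn_translation Vs par cpt) J)"
proof -
  interpret bayes_net Vs par cpt
    by (rule bayes_net.intro) (rule assms(1))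
  have "{J. J \<subseteq> lp_atoms \<Pi>\<^sub>B \<and> {v. RV v \<in> J} = I} = bn_interp I ` Pow entries"
    using assms(2) by (rule lp_atoms_fibre)
  moreover have "inj_on (bn_interp I) (Pow entries)"
    by (simp add: inj_on_def bn_interp_eq_iff)
  ultimately have "(\<Sum>J\<in>{J. J \<subseteq> lp_atoms \<Pi>\<^sub>B \<and> {v. RV v \<in> J} = I}. P \<Pi>\<^sub>B J) =
      (\<Sum>G\<in>Pow entries. P \<Pi>\<^sub>B (bn_interp I G))"
    by (simp add: sum.reindex)
  also have "\<dots> = (\<Sum>G\<in>Pow entries. if agrees I G then entries_prob G else 0)"
    using assms(2) by (intro sum.cong refl P_translation_interp) auto
  also have "\<dots> = bn_prob Vs par cpt I"
    using assms(2) by (rule sum_agrees_entries_prob)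
  finally show ?thesis ..
qed

end
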